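(* For each $n$, let $\delta_1,\ldots,\delta_n>0$ be expected degrees with $\delta_i\delta_j\le \sum_{k=1}^n\delta_k$ for all $i,j$, and let $A$ be the adjacency matrix of a random undirected graph on $\{1,\ldots,n\}$ drawn from the Chung-Lu model: $A$ is symmetric, $A(i,i)=0$, and the entries $\{A(i,j):1\le i<j\le n\}$ are independent with $A(i,j)\sim\mathrm{Bernoulli}(P(i,j))$, where $P(i,j)=\frac{\delta_i\delta_j}{\sum_{k=1}^n\delta_k}$. Let $d_i=\sum_{j=1}^n A(i,j)$ be the degree of node $i$, and set $m_1=\sum_{i=1}^n d_i$, $m_2=\sum_{i=1}^n d_i^2$, $\mu_1=\sum_{i=1}^n\delta_i$, $\mu_2=\sum_{i=1}^n\delta_i^2$. Suppose that, as $n\to\infty$, $\frac{1}{n}\sum_{i=1}^n\delta_i\to\infty$ and $\frac{\sum_i\delta_i^2}{\sum_i\delta_i}=\omega(\log^2 n)$. Then for every $\epsilon>0$, $$P\left[\left|\frac{m_1}{\mu_1}-1\right|>\epsilon\right]\to 0\quad\text{and}\quad P\left[\left|\frac{m_2}{\mu_2}-1\right|>\epsilon\right]\to 0\qquad (n\to\infty).$$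
   Context: The expected degrees $\delta_i=\delta_i^{(n)}$ may depend on $n$; all limits are as $n\to\infty$. $f(n)=\omega(g(n))$ means $f(n)/g(n)\to\infty$. *)

theory Defs
  imports "HOL-Probability.Probability" "HOL-Library.Landau_Symbols"
begin

text \<open>Vertices are 0,...,n-1. \<open>\<delta> n i\<close> is the expected degree of vertex i in the n-th model.\<close>

definition mu1 :: "(nat \<Rightarrow> nat \<Rightarrow> real) \<Rightarrow> nat \<Rightarrow> real" where
  "mu1 \<delta> n = (\<Sum>k<n. \<delta> n k)"

definition mu2 :: "(nat \<Rightarrow> nat \<Rightarrow> real) \<Rightarrow> nat \<Rightarrow> real" where
  "mu2 \<delta> n = (\<Sum>k<n. (\<delta> n k)^2)"

definition CL_prob :: "(nat \<Rightarrow> nat \<Rightarrow> real) \<Rightarrow> nat \<Rightarrow> nat \<Rightarrow> nat \<Rightarrow> real" where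
  "CL_prob \<delta> n i j = \<delta> n i * \<delta> n j / mu1 \<delta> n"

text \<open>Unordered vertex pairs, represented as (i,j) with i < j < n.\<close>
definition upper_pairs :: "nat \<Rightarrow> (nat \<times> nat) set" where
  "upper_pairs n = {(i, j). i < j \<and> j < n}"

definition chung_lu :: "(nat \<Rightarrow> nat \<Rightarrow> real) \<Rightarrow> nat \<Rightarrow> (nat \<times> nat \<Rightarrow> bool) pmf" where
  "chung_lu \<delta> n = Pi_pmf (upper_pairs n) False
      (\<lambda>(i, j). bernoulli_pmf (CL_prob \<delta> n i j))"

definition adj :: "(nat \<times> nat \<Rightarrow> bool) \<Rightarrow> nat \<Rightarrow> nat \<Rightarrow> real" where
  "adj E i j = (if i < j then (if E (i, j) then 1 else 0)
               else if j < i then (if E (j, i) then 1 else 0) else 0)"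

definition deg :: "nat \<Rightarrow> (nat \<times> nat \<Rightarrow> bool) \<Rightarrow> nat \<Rightarrow> real" where
  "deg n E i = (\<Sum>j<n. adj E i j)"

definition m1 :: "nat \<Rightarrow> (nat \<times> nat \<Rightarrow> bool) \<Rightarrow> real" where
  "m1 n E = (\<Sum>i<n. deg n E i)"

definition m2 :: "nat \<Rightarrow> (nat \<times> nat \<Rightarrow> bool) \<Rightarrow> real" where
  "m2 n E = (\<Sum>i<n. (deg n E i)^2)"

end

theory Submission
  imports Defs
begin

(* Let S = \<Sum>i (d i - \<delta> i)^2. Apart from the constant P(i,i), d i - \<delta> i is a sum of
   independent centred Bernoulli variables, so E[(d i - \<delta> i)^2] \<le> \<delta> i, E[S] \<le> \<mu>1, and
   Markov's inequality gives P[S \<ge> c] \<le> \<mu>1 / c.  Deterministically, Cauchy-Schwarz gives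
   (m1 - \<mu>1)^2 \<le> n S, and the triangle inequality in l2 gives |m2 - \<mu>2| \<le> 3 \<eta> \<mu>2 whenever
   S < \<eta>^2 \<mu>2.  So the two probabilities are O(n / \<mu>1) and O(\<mu>1 / \<mu>2), and both vanish. *)

lemma integrable_Pi_pmf_bool:
  assumes "finite A"
  shows "integrable (measure_pmf (Pi_pmf A (d :: bool) p)) (f :: _ \<Rightarrow> real)"
  using assms by (intro integrable_measure_pmf_finite) (auto simp: set_Pi_pmf intro!: finite_PiE_dflt)

lemma expectation_centered_bernoulli_Pi_pmf:
  assumes "finite A" "e \<in> A" "0 \<le> q e" "q e \<le> 1"
  shows "measure_pmf.expectation (Pi_pmf A False (\<lambda>e. bernoulli_pmf (q e)))
           (\<lambda>E. of_bool (E e) - q e) = 0"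
proof -
  have "measure_pmf.expectation (Pi_pmf A False (\<lambda>e. bernoulli_pmf (q e))) (\<lambda>E. of_bool (E e) - q e)
      = measure_pmf.expectation (map_pmf (\<lambda>E. E e) (Pi_pmf A False (\<lambda>e. bernoulli_pmf (q e))))
          (\<lambda>b. of_bool b - q e)"
    by simp
  also have "\<dots> = 0"
    using assms by (simp add: Pi_pmf_component)
  finally show ?thesis .
qed

lemma expectation_centered_bernoulli_Pi_pmf_square:
  assumes "finite A" "e \<in> A" "0 \<le> q e" "q e \<le> 1"
  shows "measure_pmf.expectation (Pi_pmf A False (\<lambda>e. bernoulli_pmf (q e)))
           (\<lambda>E. (of_bool (E e) - q e)^2) = q e * (1 - q e)"
proof -
  have "measure_pmf.expectation (Pi_pmf A False (\<lambda>e. bernoulli_pmf (q e))) (\<lambda>E. (of_bool (E e) - q e)^2)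
      = measure_pmf.expectation (map_pmf (\<lambda>E. E e) (Pi_pmf A False (\<lambda>e. bernoulli_pmf (q e))))
          (\<lambda>b. (of_bool b - q e)^2)"
    by simp
  also have "\<dots> = q e * (1 - q e)"
    using assms by (simp add: Pi_pmf_component power2_eq_square algebra_simps)
  finally show ?thesis .
qed

lemma expectation_centered_bernoulli_Pi_pmf_product:
  assumes A: "finite A" and ef: "e \<in> A" "f \<in> A" "e \<noteq> f"
    and q: "\<And>e. e \<in> A \<Longrightarrow> 0 \<le> q e \<and> q e \<le> 1"
  shows "measure_pmf.expectation (Pi_pmf A False (\<lambda>e. bernoulli_pmf (q e)))
           (\<lambda>E. (of_bool (E e) - q e) * (of_bool (E f) - q f)) = 0"
proof -
  let ?M = "Pi_pmf A False (\<lambda>e. bernoulli_pmf (q e))"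
  let ?Z = "\<lambda>x E. of_bool (E x) - q x :: real"
  have "prob_space.indep_vars ?M (\<lambda>_. borel) ?Z A"
    by (rule prob_space.indep_vars_compose2[OF prob_space_measure_pmf indep_vars_Pi_pmf[OF A]]) simp
  then have indep: "prob_space.indep_vars ?M (\<lambda>_. borel) ?Z {e, f}"
    by (rule prob_space.indep_vars_subset[OF prob_space_measure_pmf]) (use ef in auto)
  have "measure_pmf.expectation ?M (\<lambda>E. ?Z e E * ?Z f E) = measure_pmf.expectation ?M (\<lambda>E. \<Prod>x\<in>{e, f}. ?Z x E)"
    using ef by simp
  also have "\<dots> = (\<Prod>x\<in>{e, f}. measure_pmf.expectation ?M (?Z x))"
    by (rule prob_space.indep_vars_lebesgue_integral[OF prob_space_measure_pmf _ indep
        integrable_Pi_pmf_bool[OF A]]) simp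
  also have "\<dots> = 0"
    using ef q by (simp add: expectation_centered_bernoulli_Pi_pmf[OF A])
  finally show ?thesis .
qed

lemma expectation_sum_centered_bernoulli_Pi_pmf:
  assumes A: "finite A" and B: "B \<subseteq> A"
    and q: "\<And>e. e \<in> A \<Longrightarrow> 0 \<le> q e \<and> q e \<le> 1"
  shows "measure_pmf.expectation (Pi_pmf A False (\<lambda>e. bernoulli_pmf (q e)))
           (\<lambda>E. \<Sum>e\<in>B. of_bool (E e) - q e) = 0"
proof -
  let ?M = "Pi_pmf A False (\<lambda>e. bernoulli_pmf (q e))"
  have "measure_pmf.expectation ?M (\<lambda>E. \<Sum>e\<in>B. of_bool (E e) - q e)
      = (\<Sum>e\<in>B. measure_pmf.expectation ?M (\<lambda>E. of_bool (E e) - q e))"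
    by (rule Bochner_Integration.integral_sum[OF integrable_Pi_pmf_bool[OF A]])
  also have "\<dots> = 0"
    using B q by (intro sum.neutral) (auto intro: expectation_centered_bernoulli_Pi_pmf[OF A])
  finally show ?thesis .
qed

lemma expectation_square_sum_centered_bernoulli_Pi_pmf:
  assumes A: "finite A" and B: "B \<subseteq> A"
    and q: "\<And>e. e \<in> A \<Longrightarrow> 0 \<le> q e \<and> q e \<le> 1"
  shows "measure_pmf.expectation (Pi_pmf A False (\<lambda>e. bernoulli_pmf (q e)))
           (\<lambda>E. (\<Sum>e\<in>B. of_bool (E e) - q e)^2) = (\<Sum>e\<in>B. q e * (1 - q e))"
proof -
  let ?M = "Pi_pmf A False (\<lambda>e. bernoulli_pmf (q e))"
  let ?Z = "\<lambda>x E. of_bool (E x) - q x :: real"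
  have fin: "finite B" using A B by (rule finite_subset[rotated])
  have "measure_pmf.expectation ?M (\<lambda>E. (\<Sum>e\<in>B. ?Z e E)^2)
      = (\<Sum>e\<in>B. \<Sum>f\<in>B. measure_pmf.expectation ?M (\<lambda>E. ?Z e E * ?Z f E))"
    by (simp add: power2_eq_square sum_product integrable_Pi_pmf_bool[OF A])
  also have "\<dots> = (\<Sum>e\<in>B. measure_pmf.expectation ?M (\<lambda>E. (?Z e E)^2))"
  proof (rule sum.cong[OF refl])
    fix e assume e: "e \<in> B"
    have "(\<Sum>f\<in>B. measure_pmf.expectation ?M (\<lambda>E. ?Z e E * ?Z f E))
        = (\<Sum>f\<in>B. if f = e then measure_pmf.expectation ?M (\<lambda>E. (?Z e E)^2) else 0)"
      using B e q expectation_centered_bernoulli_Pi_pmf_product[OF A, of e _ q]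
      by (intro sum.cong) (auto simp: power2_eq_square)
    also have "\<dots> = measure_pmf.expectation ?M (\<lambda>E. (?Z e E)^2)"
      using fin e by simp
    finally show "(\<Sum>f\<in>B. measure_pmf.expectation ?M (\<lambda>E. ?Z e E * ?Z f E))
        = measure_pmf.expectation ?M (\<lambda>E. (?Z e E)^2)" .
  qed
  also have "\<dots> = (\<Sum>e\<in>B. q e * (1 - q e))"
    using B q by (intro sum.cong) (auto simp: expectation_centered_bernoulli_Pi_pmf_square[OF A])
  finally show ?thesis .
qed

lemma sum_diff_squared_le:
  fixes x y :: "'a \<Rightarrow> real"
  shows "((\<Sum>i\<in>I. x i) - (\<Sum>i\<in>I. y i))^2 \<le> card I * (\<Sum>i\<in>I. (x i - y i)^2)"
  using sum_squared_le_sum_of_squares[of "\<lambda>i. x i - y i" I] by (simp add: sum_subtractf mult.commute)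

lemma sum_squares_diff_le:
  fixes x y :: "'a \<Rightarrow> real"
  assumes close: "(\<Sum>i\<in>I. (x i - y i)^2) \<le> \<eta>^2 * (\<Sum>i\<in>I. (y i)^2)" and \<eta>: "0 \<le> \<eta>" "\<eta> \<le> 1"
  shows "\<bar>(\<Sum>i\<in>I. (x i)^2) - (\<Sum>i\<in>I. (y i)^2)\<bar> \<le> 3 * \<eta> * (\<Sum>i\<in>I. (y i)^2)"
proof -
  define a b s where "a = L2_set x I" and "b = L2_set y I" and "s = L2_set (\<lambda>i. x i - y i) I"
  have sq: "a^2 = (\<Sum>i\<in>I. (x i)^2)" "b^2 = (\<Sum>i\<in>I. (y i)^2)" "s^2 = (\<Sum>i\<in>I. (x i - y i)^2)"
    by (simp_all add: a_def b_def s_def L2_set_def sum_nonneg)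
  have nonneg: "0 \<le> a" "0 \<le> b" "0 \<le> s" by (simp_all add: a_def b_def s_def)
  have "s^2 \<le> (\<eta> * b)^2" using close by (simp add: sq power_mult_distrib)
  then have s_le: "s \<le> \<eta> * b" using nonneg \<eta> by (simp add: power2_le_iff_abs_le)
  have "a \<le> s + b"
    using L2_set_triangle_ineq[of "\<lambda>i. x i - y i" y I] by (simp add: a_def b_def s_def)
  moreover have "b \<le> s + a"
    using L2_set_triangle_ineq[of "\<lambda>i. y i - x i" x I]
    by (simp add: a_def b_def s_def L2_set_def power2_commute)
  ultimately have "\<bar>a - b\<bar> \<le> \<eta> * b" "a + b \<le> 3 * b"
    using s_le \<eta> nonneg mult_left_le_one_le[of b \<eta>] by auto
  then have "\<bar>a - b\<bar> * (a + b) \<le> (\<eta> * b) * (3 * b)"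
    using nonneg \<eta> by (intro mult_mono) auto
  moreover have "a^2 - b^2 = (a - b) * (a + b)"
    by (simp add: power2_eq_square algebra_simps)
  then have "\<bar>a^2 - b^2\<bar> = \<bar>a - b\<bar> * (a + b)"
    using nonneg by (simp add: abs_mult)
  ultimately have "\<bar>a^2 - b^2\<bar> \<le> 3 * \<eta> * b^2"
    by (simp add: power2_eq_square algebra_simps)
  then show ?thesis by (simp only: sq)
qed

lemma tendsto_0_if_eventually_le_divide:
  fixes f r :: "'a \<Rightarrow> real"
  assumes r: "filterlim r at_top F" and le: "\<forall>\<^sub>F x in F. f x \<le> C / r x"
    and nonneg: "\<And>x. 0 \<le> f x"
  shows "(f \<longlongrightarrow> 0) F"
proof (rule tendsto_sandwich[of "\<lambda>_. 0" f F "\<lambda>x. C / r x"])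
  show "((\<lambda>x. C / r x) \<longlongrightarrow> 0) F"
    by (rule tendsto_divide_0[OF tendsto_const filterlim_at_top_imp_at_infinity[OF r]])
qed (simp_all add: nonneg le)

lemma filterlim_at_top_if_smallo:
  fixes f g :: "'a \<Rightarrow> real"
  assumes fg: "f \<in> o[F](g)" and f: "filterlim f at_top F" and g: "\<forall>\<^sub>F x in F. 0 \<le> g x"
  shows "filterlim g at_top F"
proof (rule filterlim_at_top_mono[OF f])
  show "\<forall>\<^sub>F x in F. f x \<le> g x"
    using landau_o.smallD[OF fg zero_less_one] g by eventually_elim auto
qed

definition edge :: "nat \<Rightarrow> nat \<Rightarrow> nat \<times> nat" where
  "edge i j = (min i j, max i j)"

lemma chung_lu_altdef:
  "chung_lu \<delta> n = Pi_pmf (upper_pairs n) False (\<lambda>e. bernoulli_pmf (case_prod (CL_prob \<delta> n) e))"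
  by (simp add: chung_lu_def split_def)

lemma finite_upper_pairs: "finite (upper_pairs n)"
  by (rule finite_subset[of _ "{..<n} \<times> {..<n}"]) (auto simp: upper_pairs_def)

lemma inj_on_edge: "inj_on (edge i) (- {i})"
  by (auto simp: inj_on_def edge_def min_def max_def split: if_splits)

lemma edge_in_upper_pairs: "i < n \<Longrightarrow> j < n \<Longrightarrow> i \<noteq> j \<Longrightarrow> edge i j \<in> upper_pairs n"
  by (auto simp: edge_def upper_pairs_def min_def max_def)

lemma adj_eq_edge: "i \<noteq> j \<Longrightarrow> adj E i j = of_bool (E (edge i j))"
  by (auto simp: adj_def edge_def min_def max_def)

lemma adj_diag [simp]: "adj E i i = 0"
  by (simp add: adj_def)

lemma CL_prob_edge: "case_prod (CL_prob \<delta> n) (edge i j) = CL_prob \<delta> n i j"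
  by (simp add: edge_def CL_prob_def min_def max_def mult.commute)

definition degree_deviation :: "(nat \<Rightarrow> nat \<Rightarrow> real) \<Rightarrow> nat \<Rightarrow> (nat \<times> nat \<Rightarrow> bool) \<Rightarrow> real" where
  "degree_deviation \<delta> n E = (\<Sum>i<n. (deg n E i - \<delta> n i)^2)"

context
  fixes \<delta> :: "nat \<Rightarrow> nat \<Rightarrow> real" and n :: nat
  assumes pos: "\<And>i. i < n \<Longrightarrow> \<delta> n i > 0"
begin

lemma mu1_pos: "n > 0 \<Longrightarrow> mu1 \<delta> n > 0"
  unfolding mu1_def using pos by (intro sum_pos) auto

lemma mu2_pos: "n > 0 \<Longrightarrow> mu2 \<delta> n > 0"
  unfolding mu2_def by (intro sum_pos zero_less_power pos) auto

lemma sum_CL_prob: "i < n \<Longrightarrow> (\<Sum>j<n. CL_prob \<delta> n i j) = \<delta> n i"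
  using mu1_pos by (simp add: CL_prob_def mu1_def flip: sum_divide_distrib sum_distrib_left)

lemma CL_prob_nonneg: "i < n \<Longrightarrow> j < n \<Longrightarrow> CL_prob \<delta> n i j \<ge> 0"
  using pos mu1_pos by (simp add: CL_prob_def less_imp_le)

lemma deg_minus_expected:
  assumes "i < n"
  shows "deg n E i - \<delta> n i
    = (\<Sum>e\<in>edge i ` ({..<n} - {i}). of_bool (E e) - case_prod (CL_prob \<delta> n) e) - CL_prob \<delta> n i i"
proof -
  have inj: "inj_on (edge i) ({..<n} - {i})"
    using inj_on_edge by (rule inj_on_subset) auto
  have "deg n E i = (\<Sum>j\<in>{..<n} - {i}. adj E i j)"
    using assms by (simp add: deg_def sum.remove)
  also have "\<dots> = (\<Sum>j\<in>{..<n} - {i}. of_bool (E (edge i j)))"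
    by (intro sum.cong) (auto simp: adj_eq_edge)
  moreover have "\<delta> n i = CL_prob \<delta> n i i + (\<Sum>j\<in>{..<n} - {i}. CL_prob \<delta> n i j)"
    using assms by (simp add: sum_CL_prob flip: sum.remove)
  ultimately show ?thesis
    by (simp add: sum.reindex[OF inj] CL_prob_edge sum_subtractf)
qed

context
  assumes bound: "\<And>i j. i < n \<Longrightarrow> j < n \<Longrightarrow> \<delta> n i * \<delta> n j \<le> mu1 \<delta> n"
begin

lemma CL_prob_le_1: "i < n \<Longrightarrow> j < n \<Longrightarrow> CL_prob \<delta> n i j \<le> 1"
  using bound mu1_pos by (simp add: CL_prob_def)

lemma expectation_deg_deviation_square_le:
  assumes i: "i < n"
  shows "measure_pmf.expectation (chung_lu \<delta> n) (\<lambda>E. (deg n E i - \<delta> n i)^2) \<le> \<delta> n i"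
proof -
  define q where "q = case_prod (CL_prob \<delta> n)"
  define B where "B = edge i ` ({..<n} - {i})"
  define p where "p = CL_prob \<delta> n i i"
  let ?M = "Pi_pmf (upper_pairs n) False (\<lambda>e. bernoulli_pmf (q e))"
  let ?Z = "\<lambda>E. \<Sum>e\<in>B. of_bool (E e) - q e"
  have A: "finite (upper_pairs n)" by (rule finite_upper_pairs)
  have B: "B \<subseteq> upper_pairs n" using i by (auto simp: B_def intro: edge_in_upper_pairs)
  have q: "0 \<le> q e \<and> q e \<le> 1" if "e \<in> upper_pairs n" for e
    using that CL_prob_nonneg CL_prob_le_1 by (auto simp: q_def upper_pairs_def)
  have int: "integrable ?M (f :: _ \<Rightarrow> real)" for f by (rule integrable_Pi_pmf_bool[OF A])
  have EZ: "measure_pmf.expectation ?M ?Z = 0"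
    by (rule expectation_sum_centered_bernoulli_Pi_pmf[OF A B]) (rule q)
  have "measure_pmf.expectation (chung_lu \<delta> n) (\<lambda>E. (deg n E i - \<delta> n i)^2)
      = measure_pmf.expectation ?M (\<lambda>E. (?Z E)^2 - 2 * p * ?Z E + p^2)"
    using i by (simp add: chung_lu_altdef deg_minus_expected q_def B_def p_def power2_diff algebra_simps)
  also have "\<dots> = (\<Sum>e\<in>B. q e * (1 - q e)) + p^2"
    using EZ by (simp add: int expectation_square_sum_centered_bernoulli_Pi_pmf[OF A B q])
  also have "\<dots> \<le> (\<Sum>e\<in>B. q e) + p"
  proof (intro add_mono sum_mono)
    show "q e * (1 - q e) \<le> q e" if "e \<in> B" for e
      using q[of e] that B by (auto simp: mult_left_le)
    show "p^2 \<le> p"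
      using i CL_prob_nonneg CL_prob_le_1 by (simp add: p_def power2_eq_square mult_left_le)
  qed
  also have "(\<Sum>e\<in>B. q e) + p = \<delta> n i"
  proof -
    have "inj_on (edge i) ({..<n} - {i})"
      using inj_on_edge by (rule inj_on_subset) auto
    then have "(\<Sum>e\<in>B. q e) = (\<Sum>j\<in>{..<n} - {i}. CL_prob \<delta> n i j)"
      by (simp add: B_def q_def sum.reindex CL_prob_edge)
    then show ?thesis
      using sum.remove[of "{..<n}" i "CL_prob \<delta> n i"] sum_CL_prob[OF i] i by (simp add: p_def)
  qed
  finally show ?thesis .
qed

lemma prob_degree_deviation_ge:
  assumes c: "c > 0"
  shows "measure_pmf.prob (chung_lu \<delta> n) {E. c \<le> degree_deviation \<delta> n E} \<le> mu1 \<delta> n / c"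
proof -
  let ?M = "measure_pmf (chung_lu \<delta> n)"
  have int: "integrable ?M (f :: _ \<Rightarrow> real)" for f
    unfolding chung_lu_def by (rule integrable_Pi_pmf_bool[OF finite_upper_pairs])
  have "measure_pmf.expectation (chung_lu \<delta> n) (degree_deviation \<delta> n)
      = (\<Sum>i<n. measure_pmf.expectation (chung_lu \<delta> n) (\<lambda>E. (deg n E i - \<delta> n i)^2))"
    unfolding degree_deviation_def by (rule Bochner_Integration.integral_sum[OF int])
  also have "\<dots> \<le> mu1 \<delta> n"
    unfolding mu1_def by (intro sum_mono expectation_deg_deviation_square_le) simp
  finally have "measure_pmf.expectation (chung_lu \<delta> n) (degree_deviation \<delta> n) \<le> mu1 \<delta> n" .
  moreover have "measure_pmf.prob (chung_lu \<delta> n) {E \<in> space ?M. c \<le> degree_deviation \<delta> n E}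
      \<le> measure_pmf.expectation (chung_lu \<delta> n) (degree_deviation \<delta> n) / c"
    by (rule integral_Markov_inequality_measure[OF int _ _ c])
      (auto simp: degree_deviation_def intro!: sum_nonneg)
  ultimately show ?thesis
    using c by (simp add: divide_right_mono order_trans)
qed

lemma prob_m1_deviation_le:
  assumes n: "n > 0" and \<epsilon>: "\<epsilon> > 0"
  shows "measure_pmf.prob (chung_lu \<delta> n) {E. \<bar>m1 n E / mu1 \<delta> n - 1\<bar> > \<epsilon>}
    \<le> 1 / \<epsilon>^2 / (mu1 \<delta> n / n)"
proof -
  have mu1: "mu1 \<delta> n > 0" using mu1_pos[OF n] .
  have "(\<epsilon> * mu1 \<delta> n)^2 / n \<le> degree_deviation \<delta> n E"
    if "\<bar>m1 n E / mu1 \<delta> n - 1\<bar> > \<epsilon>" for E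
  proof -
    have "\<epsilon> * mu1 \<delta> n \<le> \<bar>m1 n E - mu1 \<delta> n\<bar>"
      using that mu1 by (simp add: field_simps)
    then have "(\<epsilon> * mu1 \<delta> n)^2 \<le> \<bar>m1 n E - mu1 \<delta> n\<bar>^2"
      using \<epsilon> mu1 by (intro power_mono) auto
    also have "\<dots> \<le> n * degree_deviation \<delta> n E"
      using sum_diff_squared_le[of "deg n E" "{..<n}" "\<delta> n"]
      by (simp add: m1_def mu1_def degree_deviation_def)
    finally show ?thesis using n by (simp add: field_simps)
  qed
  then have "measure_pmf.prob (chung_lu \<delta> n) {E. \<bar>m1 n E / mu1 \<delta> n - 1\<bar> > \<epsilon>}
      \<le> measure_pmf.prob (chung_lu \<delta> n) {E. (\<epsilon> * mu1 \<delta> n)^2 / n \<le> degree_deviation \<delta> n E}"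
    by (intro measure_pmf.finite_measure_mono) auto
  also have "\<dots> \<le> mu1 \<delta> n / ((\<epsilon> * mu1 \<delta> n)^2 / n)"
    using n \<epsilon> mu1 by (intro prob_degree_deviation_ge) simp
  also have "\<dots> = 1 / \<epsilon>^2 / (mu1 \<delta> n / n)"
    using mu1 by (simp add: field_simps power2_eq_square)
  finally show ?thesis .
qed

lemma prob_m2_deviation_le:
  assumes n: "n > 0" and \<epsilon>: "\<epsilon> > 0"
  shows "measure_pmf.prob (chung_lu \<delta> n) {E. \<bar>m2 n E / mu2 \<delta> n - 1\<bar> > \<epsilon>}
    \<le> 1 / (min 1 (\<epsilon> / 3))^2 / (mu2 \<delta> n / mu1 \<delta> n)"
proof -
  define \<eta> where "\<eta> = min 1 (\<epsilon> / 3)"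
  have \<eta>: "0 < \<eta>" "\<eta> \<le> 1" "3 * \<eta> \<le> \<epsilon>" using \<epsilon> by (auto simp: \<eta>_def)
  have mu1: "mu1 \<delta> n > 0" and mu2: "mu2 \<delta> n > 0" using mu1_pos[OF n] mu2_pos[OF n] .
  have "\<eta>^2 * mu2 \<delta> n \<le> degree_deviation \<delta> n E"
    if "\<bar>m2 n E / mu2 \<delta> n - 1\<bar> > \<epsilon>" for E
  proof (rule ccontr)
    assume "\<not> ?thesis"
    then have "\<bar>m2 n E - mu2 \<delta> n\<bar> \<le> 3 * \<eta> * mu2 \<delta> n"
      using sum_squares_diff_le[of "deg n E" "\<delta> n" "{..<n}" \<eta>] \<eta>
      by (simp add: m2_def mu2_def degree_deviation_def)
    moreover have "m2 n E / mu2 \<delta> n - 1 = (m2 n E - mu2 \<delta> n) / mu2 \<delta> n"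
      using mu2 by (simp add: field_simps)
    ultimately have "\<bar>m2 n E / mu2 \<delta> n - 1\<bar> \<le> 3 * \<eta>"
      using mu2 by (simp add: abs_div divide_le_eq)
    then show False using that \<eta>(3) by linarith
  qed
  then have "measure_pmf.prob (chung_lu \<delta> n) {E. \<bar>m2 n E / mu2 \<delta> n - 1\<bar> > \<epsilon>}
      \<le> measure_pmf.prob (chung_lu \<delta> n) {E. \<eta>^2 * mu2 \<delta> n \<le> degree_deviation \<delta> n E}"
    by (intro measure_pmf.finite_measure_mono) auto
  also have "\<dots> \<le> mu1 \<delta> n / (\<eta>^2 * mu2 \<delta> n)"
    using \<eta> mu2 by (intro prob_degree_deviation_ge) simp
  also have "\<dots> = 1 / \<eta>^2 / (mu2 \<delta> n / mu1 \<delta> n)"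
    using mu1 mu2 by (simp add: field_simps)
  finally show ?thesis by (simp only: \<eta>_def)
qed

end

end

theorem theorem2:
  fixes \<delta> :: "nat \<Rightarrow> nat \<Rightarrow> real"
  assumes pos: "\<And>n i. i < n \<Longrightarrow> \<delta> n i > 0"
    and bound: "\<And>n i j. i < n \<Longrightarrow> j < n \<Longrightarrow> \<delta> n i * \<delta> n j \<le> mu1 \<delta> n"
    and avg: "filterlim (\<lambda>n. mu1 \<delta> n / real n) at_top sequentially"
    and omega: "(\<lambda>n. (ln (real n))^2) \<in> o(\<lambda>n. mu2 \<delta> n / mu1 \<delta> n)"
  shows "\<forall>\<epsilon>>0.
      ((\<lambda>n. measure_pmf.prob (chung_lu \<delta> n) {E. \<bar>m1 n E / mu1 \<delta> n - 1\<bar> > \<epsilon>}) \<longlongrightarrow> 0) sequentially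
    \<and> ((\<lambda>n. measure_pmf.prob (chung_lu \<delta> n) {E. \<bar>m2 n E / mu2 \<delta> n - 1\<bar> > \<epsilon>}) \<longlongrightarrow> 0) sequentially"
proof (intro allI impI conjI)
  fix \<epsilon> :: real assume \<epsilon>: "\<epsilon> > 0"
  have "\<forall>\<^sub>F n in sequentially. measure_pmf.prob (chung_lu \<delta> n) {E. \<bar>m1 n E / mu1 \<delta> n - 1\<bar> > \<epsilon>}
      \<le> 1 / \<epsilon>^2 / (mu1 \<delta> n / n)"
    using eventually_gt_at_top[of 0] by eventually_elim (rule prob_m1_deviation_le[OF pos bound _ \<epsilon>])
  then show "((\<lambda>n. measure_pmf.prob (chung_lu \<delta> n) {E. \<bar>m1 n E / mu1 \<delta> n - 1\<bar> > \<epsilon>}) \<longlongrightarrow> 0) sequentially"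
    by (rule tendsto_0_if_eventually_le_divide[OF avg]) simp
  have ratio: "filterlim (\<lambda>n. mu2 \<delta> n / mu1 \<delta> n) at_top sequentially"
  proof (rule filterlim_at_top_if_smallo[OF omega])
    show "filterlim (\<lambda>n. (ln (real n))^2) at_top sequentially"
      by (intro filterlim_pow_at_top filterlim_compose[OF ln_at_top filterlim_real_sequentially]) auto
    show "\<forall>\<^sub>F n in sequentially. 0 \<le> mu2 \<delta> n / mu1 \<delta> n"
      using eventually_gt_at_top[of 0]
      by eventually_elim (intro divide_nonneg_pos less_imp_le mu1_pos mu2_pos pos)
  qed
  have "\<forall>\<^sub>F n in sequentially. measure_pmf.prob (chung_lu \<delta> n) {E. \<bar>m2 n E / mu2 \<delta> n - 1\<bar> > \<epsilon>}
      \<le> 1 / (min 1 (\<epsilon> / 3))^2 / (mu2 \<delta> n / mu1 \<delta> n)"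
    using eventually_gt_at_top[of 0] by eventually_elim (rule prob_m2_deviation_le[OF pos bound _ \<epsilon>])
  then show "((\<lambda>n. measure_pmf.prob (chung_lu \<delta> n) {E. \<bar>m2 n E / mu2 \<delta> n - 1\<bar> > \<epsilon>}) \<longlongrightarrow> 0) sequentially"
    by (rule tendsto_0_if_eventually_le_divide[OF ratio]) simp
qed

end
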